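(* Let $\mathcal{P}$ be a set of mutually commuting Pauli operators on $n$ qubits generated by $r$ independent Pauli operators. The qubitwise diagonalization algorithm described in the context, with the logarithmic-depth version of Step 2 and with a null vector of symplectic weight at most $r^{(\alpha)}+1$ chosen at each stage $\alpha$, outputs a Clifford circuit that simultaneously diagonalizes all operators in $\mathcal{P}$, in which each stage has depth $O(\log r^{(\alpha)})$ and the whole circuit has depth $O(n\log r)$, assuming two-qubit gates that share a qubit cannot be executed in parallel while gates on disjoint qubits can.
   Context: A Pauli operator on $m$ qubits is encoded, up to phase, by $u=(\boldsymbol{x},\boldsymbol{z})\in\mathbb{F}_2^{2m}$ via $P=\bigotimes_{j=1}^m X^{x_j}Z^{z_j}$. For a set of Pauli operators, the tableau $(\mathcal{X}\mid\mathcal{Z})$ is the binary matrix whose rows encode the operators; the number of independent generators is its $\mathbb{F}_2$-rank. An operator is diagonal on qubit $j$ if its $j$-th tensor factor is $I$ or $Z$. The symplectic weight of $(\boldsymbol{v},\boldsymbol{w})\in\mathbb{F}_2^{2m}$ is $\omega(\boldsymbol{v},\boldsymbol{w})=|\{j: (v_j,w_j)\neq(0,0)\}|$. Qubitwise diagonalization algorithm. At stage $\alpha$: discard the qubits on which all operators are already diagonal; let $n^{(\alpha)}$ be the number of remaining qubits (stop if $n^{(\alpha)}=0$); let $T^{(\alpha)}$ be an independent generating set of the operators restricted to the remaining qubits, of size $r^{(\alpha)}$, with $r^{(\alpha)}\times 2n^{(\alpha)}$ tableau $M^{(\alpha)}$. Choose a nonzero $(\boldsymbol{v},\boldsymbol{w})$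 with $M^{(\alpha)}(\boldsymbol{v};\boldsymbol{w})=0$ over $\mathbb{F}_2$. Step 1: for each qubit $j$, if $v_j=0,w_j=1$ conjugate by a Hadamard $\mathrm{H}(j)$; if $v_j=w_j=1$ conjugate by the phase gate $\mathrm{S}(j)$ and then $\mathrm{H}(j)$. Step 2 (logarithmic-depth version): let $Q=(q_1,q_2,\dots)$ list the qubits $q$ with $(v_q,w_q)\neq(0,0)$; while $|Q|>1$, conjugate by $\mathrm{CNOT}(q_{2j},q_{2j-1})$ (control $q_{2j}$, target $q_{2j-1}$) for $j=1,\dots,\lfloor |Q|/2\rfloor$, then remove $q_{2},q_4,\dots,q_{2\lfloor|Q|/2\rfloor}$ from $Q$. Then proceed to stage $\alpha+1$. The output circuit is the composition of all gates used. *)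

theory Defs
  imports Complex_Main "HOL-Library.Z2"
begin

text \<open>A Pauli operator (up to phase) on qubits 0,1,2,... is encoded by its X-part and Z-part,
  binary vectors over F2 (type bit).  P = tensor_j X^(x j) Z^(z j).\<close>
type_synonym pauli = "(nat \<Rightarrow> bit) \<times> (nat \<Rightarrow> bit)"

definition pauli_on :: "nat \<Rightarrow> pauli \<Rightarrow> bool" where
  "pauli_on n p \<longleftrightarrow> (\<forall>j\<ge>n. fst p j = 0 \<and> snd p j = 0)"

definition vsum :: "pauli set \<Rightarrow> pauli" where
  "vsum T = ((\<lambda>j. \<Sum>p\<in>T. fst p j), (\<lambda>j. \<Sum>p\<in>T. snd p j))"

definition f2span :: "pauli set \<Rightarrow> pauli set" where
  "f2span S = {vsum T | T. finite T \<and> T \<subseteq> S}"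

definition f2indep :: "pauli set \<Rightarrow> bool" where
  "f2indep S \<longleftrightarrow> (\<forall>T. finite T \<and> T \<subseteq> S \<and> T \<noteq> {} \<longrightarrow> vsum T \<noteq> ((\<lambda>_. 0), (\<lambda>_. 0)))"

text \<open>Symplectic product; Paulis commute iff it is 0.\<close>
definition symp :: "nat \<Rightarrow> pauli \<Rightarrow> pauli \<Rightarrow> bit" where
  "symp n p q = (\<Sum>j<n. fst p j * snd q j + snd p j * fst q j)"

text \<open>Diagonal on every qubit j < n: each tensor factor is I or Z.\<close>
definition diagonal_on :: "nat \<Rightarrow> pauli \<Rightarrow> bool" where
  "diagonal_on n p \<longleftrightarrow> (\<forall>j<n. fst p j = 0)"

text \<open>Clifford gates: Hadamard, phase gate S, CNOT (control, target).\<close>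
datatype gate = Hd nat | Ph nat | CX nat nat

text \<open>Tableau action of conjugation P \<mapsto> U P U^dagger (up to phase).\<close>
fun conj_gate :: "gate \<Rightarrow> pauli \<Rightarrow> pauli" where
  "conj_gate (Hd j) (x, z) = (x(j := z j), z(j := x j))"
| "conj_gate (Ph j) (x, z) = (x, z(j := z j + x j))"
| "conj_gate (CX c t) (x, z) = (x(t := x t + x c), z(c := z c + z t))"

text \<open>A circuit is a gate list, first gate applied first.\<close>
definition conj_circ :: "gate list \<Rightarrow> pauli \<Rightarrow> pauli" where
  "conj_circ gs p = fold conj_gate gs p"

text \<open>Depth: gates sharing a qubit cannot run in parallel, gates on disjoint qubits can;
  ASAP layering (length of the longest dependency chain).\<close>
fun gate_qubits :: "gate \<Rightarrow> nat set" where
  "gate_qubits (Hd j) = {j}"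
| "gate_qubits (Ph j) = {j}"
| "gate_qubits (CX c t) = {c, t}"

fun sched :: "(nat \<Rightarrow> nat) \<Rightarrow> gate list \<Rightarrow> (nat \<Rightarrow> nat)" where
  "sched t [] = t"
| "sched t (g # gs) =
     sched (let d = Suc (Max (t ` gate_qubits g)) in (\<lambda>q. if q \<in> gate_qubits g then d else t q)) gs"

definition depth :: "gate list \<Rightarrow> nat" where
  "depth gs = Max (insert 0 (sched (\<lambda>_. 0) gs ` (\<Union>g\<in>set gs. gate_qubits g)))"

definition active :: "nat \<Rightarrow> pauli set \<Rightarrow> nat set" where
  "active n S = {j. j < n \<and> (\<exists>p\<in>S. fst p j \<noteq> 0)}"

definition restr :: "nat set \<Rightarrow> pauli \<Rightarrow> pauli" where
  "restr A p = ((\<lambda>j. if j \<in> A then fst p j else 0), (\<lambda>j. if j \<in> A then snd p j else 0))"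

text \<open>Step 2, logarithmic-depth version.  With 0-based lists, one round applies
  CNOT(Q!(2i+1), Q!(2i)) and keeps the elements at even positions.\<close>
fun cnot_round :: "nat list \<Rightarrow> gate list" where
  "cnot_round (a # b # rest) = CX b a # cnot_round rest"
| "cnot_round _ = []"

fun keep_targets :: "nat list \<Rightarrow> nat list" where
  "keep_targets (a # b # rest) = a # keep_targets rest"
| "keep_targets xs = xs"

fun cnot_tree_fuel :: "nat \<Rightarrow> nat list \<Rightarrow> gate list" where
  "cnot_tree_fuel 0 Q = []"
| "cnot_tree_fuel (Suc k) Q =
     (if length Q \<le> 1 then [] else cnot_round Q @ cnot_tree_fuel k (keep_targets Q))"

definition cnot_tree :: "nat list \<Rightarrow> gate list" where
  "cnot_tree Q = cnot_tree_fuel (length Q) Q"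

definition step1 :: "(nat \<Rightarrow> bit) \<Rightarrow> (nat \<Rightarrow> bit) \<Rightarrow> nat list \<Rightarrow> gate list" where
  "step1 v w Q = concat (map (\<lambda>j. if v j = 0 \<and> w j = 1 then [Hd j]
                                  else if v j = 1 \<and> w j = 1 then [Ph j, Hd j] else []) Q)"

definition stage_gates :: "(nat \<Rightarrow> bit) \<Rightarrow> (nat \<Rightarrow> bit) \<Rightarrow> nat list \<Rightarrow> gate list" where
  "stage_gates v w Q = step1 v w Q @ cnot_tree Q"

text \<open>A stage: independent generating set T of the restricted operators (r = card T),
  null vector (v,w) of the tableau of T, of symplectic weight \<le> r + 1, and an
  enumeration Q of its support.\<close>
type_synonym stage = "pauli set \<times> (nat \<Rightarrow> bit) \<times> (nat \<Rightarrow> bit) \<times> nat list"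

definition stage_ok :: "nat \<Rightarrow> pauli set \<Rightarrow> stage \<Rightarrow> bool" where
  "stage_ok n S st = (case st of (T, v, w, Q) \<Rightarrow>
     (let A = active n S in
        A \<noteq> {} \<and>
        finite T \<and> f2indep T \<and> f2span T = f2span (restr A ` S) \<and>
        (\<forall>j. j \<notin> A \<longrightarrow> v j = 0 \<and> w j = 0) \<and>
        (\<exists>j\<in>A. v j \<noteq> 0 \<or> w j \<noteq> 0) \<and>
        (\<forall>p\<in>T. (\<Sum>j\<in>A. fst p j * v j + snd p j * w j) = 0) \<and>
        card {j\<in>A. v j \<noteq> 0 \<or> w j \<noteq> 0} \<le> card T + 1 \<and>
        distinct Q \<and> set Q = {j\<in>A. v j \<noteq> 0 \<or> w j \<noteq> 0}))"

definition stage_circ :: "stage \<Rightarrow> gate list" where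
  "stage_circ st = (case st of (T, v, w, Q) \<Rightarrow> stage_gates v w Q)"

definition stage_rank :: "stage \<Rightarrow> nat" where
  "stage_rank st = (case st of (T, v, w, Q) \<Rightarrow> card T)"

fun partial_run :: "nat \<Rightarrow> pauli set \<Rightarrow> stage list \<Rightarrow> bool" where
  "partial_run n S [] = True"
| "partial_run n S (st # rest) =
     (stage_ok n S st \<and> partial_run n (conj_circ (stage_circ st) ` S) rest)"

fun complete_run :: "nat \<Rightarrow> pauli set \<Rightarrow> stage list \<Rightarrow> bool" where
  "complete_run n S [] = (active n S = {})"
| "complete_run n S (st # rest) =
     (stage_ok n S st \<and> complete_run n (conj_circ (stage_circ st) ` S) rest)"

definition run_circ :: "stage list \<Rightarrow> gate list" where
  "run_circ R = concat (map stage_circ R)"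

end

theory Submission
  imports Defs "HOL-Library.Function_Algebras" "HOL-Library.Product_Plus" "HOL-Library.Discrete_Functions"
begin

text \<open>At each stage the null vector (v, w) is symplectically orthogonal to the generators, hence,
  by linearity, to the restriction of every operator to the non-diagonal qubits.  Step 1 turns the
  X-bit of each qubit j of the support Q into v j x j + w j z j, and the CNOT tree adds these bits up
  on the first qubit of Q, where they cancel by orthogonality; qubits outside Q are untouched.  So
  each stage makes one more qubit diagonal, and there are at most n stages.  Clifford conjugation
  preserves commutation and the rank bound r, and a null vector of weight at most r + 1 always
  exists: if at most r + 1 qubits are active, the symplectic dual (z, x) of a generator is one;
  otherwise some r + 1 X-columns of the generators are linearly dependent.  Step 1 has depth 2 and
  the CNOT tree on at most r + 1 qubits has depth at most 1 + log2 r, since each round halves Q.\<close>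

declare add_bit_eq_xor[simp del] mult_bit_eq_and[simp del]
  \<comment> \<open>keep bit arithmetic in ring form, so that \<open>algebra_simps\<close> applies\<close>

section \<open>Linear algebra over F2\<close>

lemma sum_fun_apply: "(\<Sum>x\<in>A. f x) j = (\<Sum>x\<in>A. (f x :: 'a \<Rightarrow> 'b::comm_monoid_add) j)"
  by (induct A rule: infinite_finite_induct) auto

definition pauli_scale :: "bit \<Rightarrow> pauli \<Rightarrow> pauli" where
  "pauli_scale c p = (\<lambda>j. c * fst p j, \<lambda>j. c * snd p j)"

definition fun_scale :: "bit \<Rightarrow> ('a \<Rightarrow> bit) \<Rightarrow> ('a \<Rightarrow> bit)" where
  "fun_scale c f = (\<lambda>x. c * f x)"

interpretation pauli: vector_space pauli_scale
  by unfold_locales (auto simp: pauli_scale_def algebra_simps fun_eq_iff)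

interpretation bitfun: vector_space fun_scale
  by unfold_locales (auto simp: fun_scale_def algebra_simps fun_eq_iff)

interpretation F2: vector_space "(*) :: bit \<Rightarrow> bit \<Rightarrow> bit"
  by unfold_locales (auto simp: algebra_simps)

interpretation pauli_pauli: vector_space_pair pauli_scale pauli_scale ..

interpretation pauli_F2: vector_space_pair pauli_scale "(*) :: bit \<Rightarrow> bit \<Rightarrow> bit" ..

lemma linear_pauli_scaleI:
  assumes "vector_space s" and add: "\<And>a b. f (a + b) = f a + f b"
  shows "Vector_Spaces.linear pauli_scale s f"
proof -
  interpret s: vector_space s by fact
  have "f 0 = 0" using add[of 0 0] by simp
  then have "f (pauli_scale c x) = s c (f x)" for c x
    by (cases c) auto
  then show ?thesis
    unfolding Vector_Spaces.linear_iff using pauli.vector_space_axioms s.vector_space_axioms add by blast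
qed

lemma vsum_eq_sum: "vsum T = (\<Sum>p\<in>T. p)"
  by (simp add: vsum_def prod_eq_iff fst_sum snd_sum fun_eq_iff sum_fun_apply)

lemma sum_pauli_scale: "finite t \<Longrightarrow> (\<Sum>v\<in>t. pauli_scale (u v) v) = (\<Sum>v\<in>{v\<in>t. u v = 1}. v)"
proof -
  assume "finite t"
  have "(\<Sum>v\<in>t. pauli_scale (u v) v) = (\<Sum>v\<in>t. if u v = 1 then v else 0)"
    by (rule sum.cong) (auto split: bit.split)
  then show ?thesis using \<open>finite t\<close> by (simp add: sum.inter_filter)
qed

lemma f2span_eq_span: "f2span S = pauli.span S"
proof
  show "f2span S \<subseteq> pauli.span S"
  proof
    fix x assume "x \<in> f2span S"
    then obtain T where "finite T" "T \<subseteq> S" "x = (\<Sum>p\<in>T. p)"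
      by (auto simp: f2span_def vsum_eq_sum)
    then show "x \<in> pauli.span S"
      using pauli.span_sum[of T id S] pauli.span_base[of _ S] by auto
  qed
  show "pauli.span S \<subseteq> f2span S"
  proof
    fix x assume "x \<in> pauli.span S"
    then obtain t u where "finite t" "t \<subseteq> S" "x = (\<Sum>v\<in>t. pauli_scale (u v) v)"
      unfolding pauli.span_explicit by blast
    then show "x \<in> f2span S" unfolding f2span_def sum_pauli_scale[OF \<open>finite t\<close>] vsum_eq_sum
      by (intro CollectI exI[of _ "{v\<in>t. u v = 1}"]) auto
  qed
qed

lemma f2indep_iff_independent: "f2indep S \<longleftrightarrow> pauli.independent S"
proof
  assume indep: "f2indep S"
  show "pauli.independent S"
  proof
    assume "pauli.dependent S"
    then obtain t u v where "finite t" "t \<subseteq> S" "(\<Sum>v\<in>t. pauli_scale (u v) v) = 0" "v \<in> t" "u v \<noteq> 0"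
      unfolding pauli.dependent_explicit by blast
    then show False using indep unfolding f2indep_def sum_pauli_scale[OF \<open>finite t\<close>] vsum_eq_sum
      by (auto simp: zero_prod_def zero_fun_def elim!: allE[of _ "{v\<in>t. u v = 1}"])
  qed
next
  assume indep: "pauli.independent S"
  show "f2indep S" unfolding f2indep_def
  proof (intro allI impI notI)
    fix T assume T: "finite T \<and> T \<subseteq> S \<and> T \<noteq> {}" and "vsum T = (\<lambda>_. 0, \<lambda>_. 0)"
    then have "(\<Sum>v\<in>T. pauli_scale 1 v) = 0" by (simp add: vsum_eq_sum zero_prod_def zero_fun_def)
    then show False using indep T pauli.independentD[of S T "\<lambda>_. 1"] by auto
  qed
qed

lemma (in vector_space) family_dependent:
  assumes "finite J" "finite B" "card B < card J" "f ` J \<subseteq> span B"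
  obtains c where "\<exists>j\<in>J. c j \<noteq> 0" "(\<Sum>j\<in>J. c j *s f j) = 0"
proof (cases "inj_on f J")
  case True
  have "dependent (f ` J)"
  proof (rule ccontr)
    assume "independent (f ` J)"
    then have "card (f ` J) \<le> card B"
      using independent_span_bound[OF \<open>finite B\<close> _ \<open>f ` J \<subseteq> span B\<close>] by blast
    then show False using card_image[OF True] \<open>card B < card J\<close> by simp
  qed
  then obtain u where u: "\<exists>x\<in>f ` J. u x \<noteq> 0" "(\<Sum>x\<in>f ` J. u x *s x) = 0"
    using dependent_finite[of "f ` J"] \<open>finite J\<close> by auto
  have "\<exists>j\<in>J. u (f j) \<noteq> 0" using u(1) by blast
  moreover have "(\<Sum>j\<in>J. u (f j) *s f j) = 0"
    using u(2) unfolding sum.reindex[OF True] comp_def .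
  ultimately show ?thesis by (rule that)
next
  case False
  then obtain i j where ij: "i \<in> J" "j \<in> J" "i \<noteq> j" "f i = f j"
    unfolding inj_on_def by blast
  define c :: "_ \<Rightarrow> 'a" where "c k = (if k = i then 1 else if k = j then - 1 else 0)" for k
  have "(\<Sum>k\<in>J. c k *s f k) = (\<Sum>k\<in>{i, j}. c k *s f k)"
    using ij \<open>finite J\<close> by (intro sum.mono_neutral_right) (auto simp: c_def)
  also have "\<dots> = f i - f j" using ij(3) by (simp add: c_def)
  finally have "(\<Sum>k\<in>J. c k *s f k) = 0" using ij(4) by simp
  with ij(1) show ?thesis by (intro that[of c]) (auto simp: c_def)
qed

definition symp_on :: "nat set \<Rightarrow> pauli \<Rightarrow> pauli \<Rightarrow> bit" where
  "symp_on A p q = (\<Sum>j\<in>A. fst p j * snd q j + snd p j * fst q j)"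

lemma symp_eq_symp_on: "symp n = symp_on {..<n}"
  by (simp add: fun_eq_iff symp_def symp_on_def)

lemma linear_symp_on_left: "Vector_Spaces.linear pauli_scale (*) (\<lambda>p. symp_on A p q)"
  by (rule linear_pauli_scaleI[OF F2.vector_space_axioms])
    (simp add: symp_on_def algebra_simps sum.distrib)

lemma linear_restr: "Vector_Spaces.linear pauli_scale pauli_scale (restr A)"
  by (rule linear_pauli_scaleI[OF pauli.vector_space_axioms]) (auto simp: restr_def fun_eq_iff)

fun proper_gate :: "gate \<Rightarrow> bool" where
  "proper_gate (CX c t) \<longleftrightarrow> c \<noteq> t"
| "proper_gate _ \<longleftrightarrow> True"

definition circ_qubits :: "gate list \<Rightarrow> nat set" where
  "circ_qubits gs = (\<Union>g\<in>set gs. gate_qubits g)"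

lemma finite_gate_qubits [simp]: "finite (gate_qubits g)"
  by (cases g) auto

lemma circ_qubits_simps [simp]:
  "circ_qubits [] = {}"
  "circ_qubits (g # gs) = gate_qubits g \<union> circ_qubits gs"
  "circ_qubits (gs @ hs) = circ_qubits gs \<union> circ_qubits hs"
  by (auto simp: circ_qubits_def)

lemma conj_circ_simps [simp]:
  "conj_circ [] p = p"
  "conj_circ (g # gs) p = conj_circ gs (conj_gate g p)"
  "conj_circ (gs @ hs) p = conj_circ hs (conj_circ gs p)"
  by (simp_all add: conj_circ_def)

lemma conj_gate_outside:
  "j \<notin> gate_qubits g \<Longrightarrow> fst (conj_gate g p) j = fst p j \<and> snd (conj_gate g p) j = snd p j"
  by (cases p; cases g) auto

lemma conj_circ_outside:
  "j \<notin> circ_qubits gs \<Longrightarrow> fst (conj_circ gs p) j = fst p j \<and> snd (conj_circ gs p) j = snd p j"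
  by (induction gs arbitrary: p) (auto dest: conj_gate_outside)

lemma conj_circ_add: "conj_circ gs (a + b) = conj_circ gs a + conj_circ gs b"
proof (induction gs arbitrary: a b)
  case (Cons g gs)
  have "conj_gate g (a + b) = conj_gate g a + conj_gate g b"
    by (cases a; cases b; cases g) (auto simp: fun_eq_iff algebra_simps)
  then show ?case using Cons.IH by simp
qed simp

lemma linear_conj_circ: "Vector_Spaces.linear pauli_scale pauli_scale (conj_circ gs)"
  by (rule linear_pauli_scaleI[OF pauli.vector_space_axioms conj_circ_add])

lemma symp_conj_gate:
  assumes "proper_gate g" "gate_qubits g \<subseteq> {..<n}"
  shows "symp n (conj_gate g p) (conj_gate g q) = symp n p q"
proof -
  obtain xp zp xq zq where pq: "p = (xp, zp)" "q = (xq, zq)" by (cases p; cases q)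
  show ?thesis
  proof (cases g)
    case (Hd j)
    show ?thesis unfolding symp_def pq Hd by (rule sum.cong) (auto simp: algebra_simps)
  next
    case (Ph j)
    have "(a::bit) * (b + c) + (d + a) * c = a * b + d * c" for a b c d
      by (cases a; cases b; cases c; cases d) simp_all
    then show ?thesis unfolding symp_def pq Ph by (intro sum.cong) auto
  next
    case (CX c t)
    have ct: "c \<noteq> t" "c < n" "t < n" using assms CX by auto
    \<comment> \<open>the CNOT changes the summands at c and t by the same amount d\<close>
    define d where "d = xp c * zq t + zp t * xq c"
    have summand: "fst (conj_gate g p) j * snd (conj_gate g q) j + snd (conj_gate g p) j * fst (conj_gate g q) j
       = (fst p j * snd q j + snd p j * fst q j) + (if j \<in> {c, t} then d else 0)" for j
      using ct unfolding pq CX d_def by (auto simp: algebra_simps)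
    have "symp n (conj_gate g p) (conj_gate g q) = symp n p q + (\<Sum>j<n. if j \<in> {c, t} then d else 0)"
      unfolding symp_def summand by (simp add: sum.distrib)
    also have "(\<Sum>j<n. if j \<in> {c, t} then d else 0) = (\<Sum>j\<in>{c, t}. d)"
      using ct by (intro sum.mono_neutral_cong_right) auto
    also have "\<dots> = 0" using ct by simp
    finally show ?thesis by simp
  qed
qed

lemma symp_conj_circ:
  "\<forall>g\<in>set gs. proper_gate g \<and> gate_qubits g \<subseteq> {..<n} \<Longrightarrow>
   symp n (conj_circ gs p) (conj_circ gs q) = symp n p q"
  by (induction gs arbitrary: p q) (auto simp: symp_conj_gate)

lemma sched_append: "sched t (gs @ hs) = sched (sched t gs) hs"
  by (induction gs arbitrary: t) auto

lemma sched_outside: "q \<notin> circ_qubits gs \<Longrightarrow> sched t gs q = t q"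
  by (induction gs arbitrary: t) (auto simp: Let_def)

lemma depth_le: "(\<And>q. sched (\<lambda>_. 0) gs q \<le> B) \<Longrightarrow> depth gs \<le> B"
  unfolding depth_def by (subst Max_le_iff) (auto simp: finite_gate_qubits)

section \<open>The CNOT tree and the basis change\<close>

lemma set_keep_targets_subset: "set (keep_targets Q) \<subseteq> set Q"
  by (induction Q rule: keep_targets.induct) auto

lemma distinct_keep_targets: "distinct Q \<Longrightarrow> distinct (keep_targets Q)"
  by (induction Q rule: keep_targets.induct) (use set_keep_targets_subset in auto)

lemma hd_keep_targets: "Q \<noteq> [] \<Longrightarrow> hd (keep_targets Q) = hd Q"
  by (induction Q rule: keep_targets.induct) auto

lemma keep_targets_eq_Nil_iff [simp]: "keep_targets Q = [] \<longleftrightarrow> Q = []"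
  by (induction Q rule: keep_targets.induct) auto

lemma length_keep_targets: "length (keep_targets Q) \<le> (length Q + 1) div 2"
  by (induction Q rule: keep_targets.induct) auto

lemma cnot_round_gates:
  "distinct Q \<Longrightarrow> g \<in> set (cnot_round Q) \<Longrightarrow> gate_qubits g \<subseteq> set Q \<and> proper_gate g"
  by (induction Q rule: cnot_round.induct) auto

lemma cnot_tree_fuel_gates:
  "distinct Q \<Longrightarrow> g \<in> set (cnot_tree_fuel k Q) \<Longrightarrow> gate_qubits g \<subseteq> set Q \<and> proper_gate g"
proof (induction k arbitrary: Q)
  case (Suc k)
  then have "g \<in> set (cnot_round Q) \<or> g \<in> set (cnot_tree_fuel k (keep_targets Q))"
    by (simp split: if_splits)
  then show ?case
    using cnot_round_gates Suc.IH[OF distinct_keep_targets] set_keep_targets_subset Suc.prems(1)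
    by blast
qed simp

text \<open>Each CNOT adds the X-bit of a removed qubit to its kept neighbour.\<close>
lemma cnot_round_parity:
  "distinct Q \<Longrightarrow>
   (\<Sum>j\<in>set (keep_targets Q). fst (conj_circ (cnot_round Q) p) j) = (\<Sum>j\<in>set Q. fst p j)"
proof (induction Q arbitrary: p rule: cnot_round.induct)
  case (1 a b rest)
  let ?p' = "conj_gate (CX b a) p"
  have d: "a \<noteq> b" "a \<notin> set rest" "b \<notin> set rest" "distinct rest" using "1.prems" by auto
  have "a \<notin> circ_qubits (cnot_round rest)"
    using cnot_round_gates[OF d(4)] d(2) by (auto simp: circ_qubits_def)
  then have head: "fst (conj_circ (cnot_round rest) ?p') a = fst p a + fst p b"
    using conj_circ_outside by (cases p) auto
  have tail: "fst ?p' j = fst p j" if "j \<in> set rest" for j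
    using d that by (cases p) auto
  have "a \<notin> set (keep_targets rest)" using set_keep_targets_subset d(2) by blast
  then have "(\<Sum>j\<in>set (keep_targets (a # b # rest)). fst (conj_circ (cnot_round (a # b # rest)) p) j)
     = fst p a + fst p b + (\<Sum>j\<in>set rest. fst ?p' j)"
    using head "1.IH"[OF d(4)] by simp
  also have "\<dots> = (\<Sum>j\<in>set (a # b # rest). fst p j)"
    using tail d by (simp add: add.assoc)
  finally show ?case .
qed auto

lemma cnot_tree_fuel_parity:
  "distinct Q \<Longrightarrow> Q \<noteq> [] \<Longrightarrow> length Q \<le> k \<Longrightarrow>
   fst (conj_circ (cnot_tree_fuel k Q) p) (hd Q) = (\<Sum>j\<in>set Q. fst p j)"
proof (induction k arbitrary: Q p)
  case (Suc k)
  show ?case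
  proof (cases "length Q \<le> 1")
    case True
    with Suc.prems obtain a where "Q = [a]" by (cases Q) auto
    then show ?thesis by simp
  next
    case False
    then have "length (keep_targets Q) \<le> k"
      using length_keep_targets[of Q] Suc.prems(3) by linarith
    then have "fst (conj_circ (cnot_tree_fuel (Suc k) Q) p) (hd Q)
       = (\<Sum>j\<in>set (keep_targets Q). fst (conj_circ (cnot_round Q) p) j)"
      using False Suc.IH[OF distinct_keep_targets] Suc.prems hd_keep_targets by simp
    then show ?thesis using cnot_round_parity[OF Suc.prems(1)] by simp
  qed
qed simp

lemma sched_cnot_round_le:
  "distinct Q \<Longrightarrow> \<forall>q\<in>set Q. t q \<le> M \<Longrightarrow> \<forall>q. t q \<le> Suc M \<Longrightarrow> sched t (cnot_round Q) q \<le> Suc M"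
proof (induction Q arbitrary: t rule: cnot_round.induct)
  case (1 a b rest)
  let ?t = "\<lambda>q. if q = b \<or> q = a then Suc (max (t b) (t a)) else t q"
  have "max (t b) (t a) \<le> M" using "1.prems"(2) by simp
  then have "\<forall>q. ?t q \<le> Suc M" using "1.prems"(3) by auto
  moreover have "\<forall>q\<in>set rest. ?t q \<le> M" using "1.prems"(1,2) by auto
  ultimately show ?case using "1.IH"[of ?t] "1.prems"(1) by (simp add: Let_def)
qed auto

text \<open>Each round has depth one and halves the list.\<close>
lemma sched_cnot_tree_fuel_le:
  "distinct Q \<Longrightarrow> length Q \<le> 2 ^ m \<Longrightarrow> \<forall>q. t q \<le> M \<Longrightarrow> sched t (cnot_tree_fuel k Q) q \<le> M + m"
proof (induction k arbitrary: Q t M m)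
  case (Suc k)
  show ?case
  proof (cases "length Q \<le> 1")
    case True
    then show ?thesis using Suc.prems(3) by (simp add: trans_le_add1)
  next
    case False
    with Suc.prems(2) obtain m' where m: "m = Suc m'" by (cases m) auto
    let ?t = "sched t (cnot_round Q)"
    have "\<forall>q. ?t q \<le> Suc M"
      using sched_cnot_round_le[OF Suc.prems(1)] Suc.prems(3) by (simp add: le_SucI)
    moreover have "length (keep_targets Q) \<le> 2 ^ m'"
      using length_keep_targets[of Q] Suc.prems(2) m by simp
    ultimately have "sched ?t (cnot_tree_fuel k (keep_targets Q)) q \<le> Suc M + m'"
      using Suc.IH[OF distinct_keep_targets[OF Suc.prems(1)]] by blast
    then show ?thesis using False m by (simp add: sched_append)
  qed
qed (simp add: trans_le_add1)

definition basis_change :: "(nat \<Rightarrow> bit) \<Rightarrow> (nat \<Rightarrow> bit) \<Rightarrow> nat \<Rightarrow> gate list" where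
  "basis_change v w j =
     (if v j = 0 \<and> w j = 1 then [Hd j] else if v j = 1 \<and> w j = 1 then [Ph j, Hd j] else [])"

lemma step1_Cons: "step1 v w (j # Q) = basis_change v w j @ step1 v w Q"
  by (simp add: step1_def basis_change_def)

lemma circ_qubits_basis_change: "circ_qubits (basis_change v w j) \<subseteq> {j}"
  by (auto simp: basis_change_def)

lemma step1_gates: "g \<in> set (step1 v w Q) \<Longrightarrow> gate_qubits g \<subseteq> set Q \<and> proper_gate g"
  by (induction Q) (auto simp: step1_def split: if_splits)

lemma step1_x_part:
  assumes "distinct Q" "j \<in> set Q" "\<forall>i\<in>set Q. v i \<noteq> 0 \<or> w i \<noteq> 0"
  shows "fst (conj_circ (step1 v w Q) p) j = v j * fst p j + w j * snd p j"
  using assms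
proof (induction Q arbitrary: p)
  case (Cons a Q)
  let ?p' = "conj_circ (basis_change v w a) p"
  show ?case
  proof (cases "j = a")
    case True
    have "a \<notin> circ_qubits (step1 v w Q)"
      using step1_gates Cons.prems(1) by (fastforce simp: circ_qubits_def)
    then have "fst (conj_circ (step1 v w (a # Q)) p) a = fst ?p' a"
      using conj_circ_outside by (simp add: step1_Cons)
    also have "\<dots> = v a * fst p a + w a * snd p a"
      using Cons.prems(3) by (cases p; cases "v a"; cases "w a") (auto simp: basis_change_def)
    finally show ?thesis using True by simp
  next
    case False
    then have "fst ?p' j = fst p j \<and> snd ?p' j = snd p j"
      using circ_qubits_basis_change by (intro conj_circ_outside) blast
    then show ?thesis using Cons False by (simp add: step1_Cons)
  qed
qed simp

lemma sched_step1_le: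
  "distinct Q \<Longrightarrow> \<forall>q\<in>set Q. t q \<le> M \<Longrightarrow> \<forall>q. t q \<le> M + 2 \<Longrightarrow> sched t (step1 v w Q) q \<le> M + 2"
proof (induction Q arbitrary: t)
  case (Cons a Q)
  let ?t = "sched t (basis_change v w a)"
  have other: "?t x = t x" if "x \<noteq> a" for x
    using circ_qubits_basis_change that by (intro sched_outside) blast
  have "?t a \<le> t a + 2" by (auto simp: basis_change_def Let_def)
  then have "\<forall>x. ?t x \<le> M + 2" using other Cons.prems(2,3) by (metis add_right_mono list.set_intros(1) order_trans)
  moreover have "\<forall>x\<in>set Q. ?t x \<le> M"
    by (metis Cons.prems(1,2) distinct.simps(2) list.set_intros(2) other)
  ultimately show ?case using Cons.IH[of ?t] Cons.prems(1) by (simp add: step1_Cons sched_append)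
qed (simp add: step1_def)

lemma active_subset: "active n S \<subseteq> {..<n}"
  by (auto simp: active_def)

lemma finite_active: "finite (active n S)"
  using active_subset finite_subset by blast

lemma card_active_le: "card (active n S) \<le> n"
  using card_mono[OF _ active_subset] by fastforce

lemma stage_okD:
  assumes "stage_ok n S (T, v, w, Q)"
  shows "Q \<noteq> []" "distinct Q" "set Q \<subseteq> active n S"
    and "finite T" "pauli.independent T" "pauli.span T = pauli.span (restr (active n S) ` S)"
    and "\<And>j. j \<in> set Q \<Longrightarrow> v j \<noteq> 0 \<or> w j \<noteq> 0"
    and "\<And>j. j \<notin> set Q \<Longrightarrow> v j = 0 \<and> w j = 0"
    and "\<forall>p\<in>T. (\<Sum>j\<in>active n S. fst p j * v j + snd p j * w j) = 0"
    and "length Q \<le> card T + 1"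
  using assms distinct_card[of Q]
  by (auto simp: stage_ok_def Let_def f2span_eq_span f2indep_iff_independent)

lemma stage_circ_gates:
  assumes "stage_ok n S (T, v, w, Q)" "g \<in> set (stage_circ (T, v, w, Q))"
  shows "gate_qubits g \<subseteq> set Q \<and> proper_gate g"
proof -
  have "g \<in> set (step1 v w Q) \<or> g \<in> set (cnot_tree_fuel (length Q) Q)"
    using assms(2) by (simp add: stage_circ_def stage_gates_def cnot_tree_def)
  then show ?thesis
    using step1_gates cnot_tree_fuel_gates[OF stage_okD(2)[OF assms(1)]] by blast
qed

lemma stage_circ_outside:
  assumes "stage_ok n S (T, v, w, Q)" "j \<notin> set Q"
  shows "fst (conj_circ (stage_circ (T, v, w, Q)) p) j = fst p j
    \<and> snd (conj_circ (stage_circ (T, v, w, Q)) p) j = snd p j"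
  using assms stage_circ_gates by (intro conj_circ_outside) (fastforce simp: circ_qubits_def)

text \<open>By linearity, since T spans the restrictions of the operators to the active qubits.\<close>
lemma stage_null_vector_orthogonal:
  assumes ok: "stage_ok n S (T, v, w, Q)" and "p \<in> S"
  shows "(\<Sum>j\<in>active n S. fst p j * v j + snd p j * w j) = 0"
proof -
  let ?A = "active n S"
  have sum_eq: "(\<Sum>j\<in>?A. fst q j * v j + snd q j * w j) = symp_on ?A q (w, v)" for q
    by (simp add: symp_on_def)
  have "restr ?A p \<in> pauli.span T"
    using stage_okD(6)[OF ok] \<open>p \<in> S\<close> by (simp add: pauli.span_base)
  then have "symp_on ?A (restr ?A p) (w, v) = 0"
    using stage_okD(9)[OF ok] pauli_F2.linear_eq_0_on_span[OF linear_symp_on_left]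
    unfolding sum_eq by blast
  moreover have "symp_on ?A (restr ?A p) (w, v) = symp_on ?A p (w, v)"
    unfolding symp_on_def by (intro sum.cong) (auto simp: restr_def)
  ultimately show ?thesis by (simp add: sum_eq)
qed

lemma stage_clears_head:
  assumes ok: "stage_ok n S (T, v, w, Q)" and "p \<in> S"
  shows "fst (conj_circ (stage_circ (T, v, w, Q)) p) (hd Q) = 0"
proof -
  note facts = stage_okD[OF ok]
  let ?p = "conj_circ (step1 v w Q) p"
  have "fst (conj_circ (stage_circ (T, v, w, Q)) p) (hd Q) = (\<Sum>j\<in>set Q. fst ?p j)"
    using cnot_tree_fuel_parity facts(1,2)
    by (simp add: stage_circ_def stage_gates_def cnot_tree_def)
  also have "\<dots> = (\<Sum>j\<in>set Q. v j * fst p j + w j * snd p j)"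
    using step1_x_part facts(2,7) by (intro sum.cong) auto
  also have "\<dots> = (\<Sum>j\<in>active n S. fst p j * v j + snd p j * w j)"
    using facts(3,8) finite_active
    by (intro sum.mono_neutral_cong_left) (auto simp: mult.commute)
  also have "\<dots> = 0" by (rule stage_null_vector_orthogonal[OF ok \<open>p \<in> S\<close>])
  finally show ?thesis .
qed

lemma card_active_stage_less:
  assumes ok: "stage_ok n S st"
  shows "card (active n (conj_circ (stage_circ st) ` S)) < card (active n S)"
proof -
  obtain T v w Q where st: "st = (T, v, w, Q)" by (cases st)
  note facts = stage_okD[OF ok[unfolded st]]
  have "active n (conj_circ (stage_circ st) ` S) \<subseteq> active n S - {hd Q}"
  proof
    fix j assume "j \<in> active n (conj_circ (stage_circ st) ` S)"
    then obtain p where p: "p \<in> S" "j < n" "fst (conj_circ (stage_circ st) p) j \<noteq> 0"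
      by (auto simp: active_def)
    have "j \<noteq> hd Q" using stage_clears_head[OF ok[unfolded st] p(1)] p(3) st by auto
    moreover have "j \<in> active n S"
      using facts(3) stage_circ_outside[OF ok[unfolded st], of j p] p st
      by (cases "j \<in> set Q") (auto simp: active_def)
    ultimately show "j \<in> active n S - {hd Q}" by auto
  qed
  moreover have "hd Q \<in> active n S" using facts(1,3) hd_in_set by blast
  ultimately show ?thesis
    using finite_active card_Diff1_less psubset_card_mono
    by (metis card_mono finite_Diff le_less_trans)
qed

section \<open>Existence of stages and complete runs\<close>

definition commuting_family :: "nat \<Rightarrow> nat \<Rightarrow> pauli set \<Rightarrow> bool" where
  "commuting_family n r S \<longleftrightarrow> (\<forall>p\<in>S. pauli_on n p) \<and> (\<forall>p\<in>S. \<forall>q\<in>S. symp n p q = 0) \<and>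
     (\<exists>G. finite G \<and> card G \<le> r \<and> S \<subseteq> pauli.span G)"

lemma commuting_family_stage:
  assumes ok: "stage_ok n S st" and fam: "commuting_family n r S"
  shows "commuting_family n r (conj_circ (stage_circ st) ` S)"
proof -
  obtain T v w Q where st: "st = (T, v, w, Q)" by (cases st)
  note facts = stage_okD[OF ok[unfolded st]]
  let ?f = "conj_circ (stage_circ st)"
  have "pauli_on n (?f p)" if "p \<in> S" for p
    unfolding pauli_on_def
  proof (intro allI impI)
    fix j assume "n \<le> j"
    then have "j \<notin> set Q" using facts(3) active_subset by fastforce
    then show "fst (?f p) j = 0 \<and> snd (?f p) j = 0"
      using stage_circ_outside[OF ok[unfolded st], of j p] fam that \<open>n \<le> j\<close> st
      by (simp add: commuting_family_def pauli_on_def)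
  qed
  moreover have "\<forall>g\<in>set (stage_circ st). proper_gate g \<and> gate_qubits g \<subseteq> {..<n}"
    using stage_circ_gates[OF ok[unfolded st]] facts(3) active_subset st by blast
  then have "\<forall>p\<in>?f ` S. \<forall>q\<in>?f ` S. symp n p q = 0"
    using fam symp_conj_circ by (auto simp: commuting_family_def)
  moreover have "\<exists>G. finite G \<and> card G \<le> r \<and> ?f ` S \<subseteq> pauli.span G"
  proof -
    obtain G where G: "finite G" "card G \<le> r" "S \<subseteq> pauli.span G"
      using fam by (auto simp: commuting_family_def)
    have "?f ` S \<subseteq> pauli.span (?f ` G)"
      using G(3) pauli_pauli.linear_span_image[OF linear_conj_circ] by blast
    then show ?thesis using G card_image_le[OF G(1), of ?f] by (intro exI[of _ "?f ` G"]) auto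
  qed
  ultimately show ?thesis by (simp add: commuting_family_def)
qed

lemma independent_in_restr_span_card_le:
  assumes fam: "commuting_family n r S" and "pauli.independent T"
    and "T \<subseteq> pauli.span (restr A ` S)"
  shows "finite T \<and> card T \<le> r"
proof -
  obtain G where G: "finite G" "card G \<le> r" "S \<subseteq> pauli.span G"
    using fam by (auto simp: commuting_family_def)
  have "restr A ` S \<subseteq> pauli.span (restr A ` G)"
    using G(3) pauli_pauli.linear_span_image[OF linear_restr] by blast
  then have "T \<subseteq> pauli.span (restr A ` G)"
    using assms(3) pauli.span_minimal pauli.subspace_span by blast
  then have "finite T \<and> card T \<le> card (restr A ` G)"
    using pauli.independent_span_bound[OF _ assms(2)] G(1) by blast
  then show ?thesis using card_image_le[OF G(1), of "restr A"] G(2) by linarith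
qed

lemma stage_rank_le:
  assumes fam: "commuting_family n r S" and ok: "stage_ok n S st"
  shows "stage_rank st \<le> r"
proof -
  obtain T v w Q where st: "st = (T, v, w, Q)" by (cases st)
  note facts = stage_okD[OF ok[unfolded st]]
  have "T \<subseteq> pauli.span (restr (active n S) ` S)"
    using facts(6) pauli.span_superset by blast
  then show ?thesis
    using independent_in_restr_span_card_le[OF fam facts(5)] st by (simp add: stage_rank_def)
qed

lemma generators_nonempty:
  assumes "active n S \<noteq> {}" "pauli.span T = pauli.span (restr (active n S) ` S)"
  shows "T \<noteq> {}"
proof
  assume "T = {}"
  obtain j p where "j \<in> active n S" "p \<in> S" "fst p j \<noteq> 0"
    using assms(1) by (auto simp: active_def)
  moreover have "restr (active n S) p \<in> pauli.span T"
    using assms(2) \<open>p \<in> S\<close> by (simp add: pauli.span_base)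
  ultimately have "fst (restr (active n S) p) j = 0" using \<open>T = {}\<close> by simp
  then show False using \<open>j \<in> active n S\<close> \<open>fst p j \<noteq> 0\<close> by (simp add: restr_def)
qed

lemma stage_rank_pos:
  assumes ok: "stage_ok n S st"
  shows "1 \<le> stage_rank st"
proof -
  obtain T v w Q where st: "st = (T, v, w, Q)" by (cases st)
  note facts = stage_okD[OF ok[unfolded st]]
  have "active n S \<noteq> {}" using facts(1,3) by auto
  then have "T \<noteq> {}" using generators_nonempty facts(6) by blast
  then show ?thesis using facts(4) st by (simp add: stage_rank_def Suc_le_eq card_gt_0_iff)
qed

text \<open>The X-columns, j \<mapsto> (fst p j for p \<in> B), live in a space of dimension card B.\<close>
lemma x_columns_dependent:
  fixes B :: "pauli set"
  assumes "finite B" "finite J" "card B < card J"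
  obtains v where "\<forall>j. j \<notin> J \<longrightarrow> v j = 0" "\<exists>j\<in>J. v j \<noteq> 0"
    "\<forall>p\<in>B. (\<Sum>j\<in>J. fst p j * v j) = 0"
proof -
  define col where "col j = (\<lambda>p :: pauli. if p \<in> B then fst p j else (0::bit))" for j
  define delta where "delta t = (\<lambda>p. if p = t then 1 else (0::bit))" for t :: pauli
  have "col j = (\<Sum>t\<in>B. fun_scale (fst t j) (delta t))" for j
    using \<open>finite B\<close> by (simp add: fun_eq_iff sum_fun_apply fun_scale_def delta_def col_def if_distrib
      cong: if_cong)
  then have "col j \<in> bitfun.span (delta ` B)" for j
    by (simp only:) (intro bitfun.span_sum bitfun.span_scale bitfun.span_base imageI)
  then have "col ` J \<subseteq> bitfun.span (delta ` B)" by blast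
  moreover have "card (delta ` B) < card J"
    using card_image_le[OF \<open>finite B\<close>, of delta] assms(3) by linarith
  ultimately obtain c where c: "\<exists>j\<in>J. c j \<noteq> 0" "(\<Sum>j\<in>J. fun_scale (c j) (col j)) = 0"
    using bitfun.family_dependent[OF \<open>finite J\<close>] \<open>finite B\<close> by blast
  show ?thesis
  proof
    show "\<forall>j. j \<notin> J \<longrightarrow> (if j \<in> J then c j else 0) = 0" by simp
    show "\<exists>j\<in>J. (if j \<in> J then c j else 0) \<noteq> 0" using c(1) by simp
    show "\<forall>p\<in>B. (\<Sum>j\<in>J. fst p j * (if j \<in> J then c j else 0)) = 0"
    proof
      fix p assume "p \<in> B"
      have "(\<Sum>j\<in>J. fun_scale (c j) (col j)) p = 0" using c(2) by simp
      then show "(\<Sum>j\<in>J. fst p j * (if j \<in> J then c j else 0)) = 0"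
        using \<open>p \<in> B\<close> by (simp add: sum_fun_apply fun_scale_def col_def mult.commute)
    qed
  qed
qed

lemma low_weight_null_vector_exists:
  assumes "finite A" "finite B" "B \<noteq> {}" "0 \<notin> B"
    and supp: "\<forall>q\<in>B. \<forall>j. j \<notin> A \<longrightarrow> fst q j = 0 \<and> snd q j = 0"
    and comm: "\<forall>p\<in>B. \<forall>q\<in>B. symp_on A p q = 0"
  shows "\<exists>v w. (\<forall>j. j \<notin> A \<longrightarrow> v j = 0 \<and> w j = 0) \<and> (\<exists>j\<in>A. v j \<noteq> 0 \<or> w j \<noteq> 0) \<and>
    (\<forall>p\<in>B. (\<Sum>j\<in>A. fst p j * v j + snd p j * w j) = 0) \<and>
    card {j\<in>A. v j \<noteq> 0 \<or> w j \<noteq> 0} \<le> card B + 1"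
proof (cases "card A \<le> card B + 1")
  case True
  obtain q where "q \<in> B" using \<open>B \<noteq> {}\<close> by blast
  then obtain j where j: "fst q j \<noteq> 0 \<or> snd q j \<noteq> 0"
    using \<open>0 \<notin> B\<close> by (metis prod_eq_iff fun_eq_iff zero_fun_def fst_zero snd_zero)
  show ?thesis
  proof (rule exI[of _ "snd q"], rule exI[of _ "fst q"], intro conjI)
    show "\<forall>j. j \<notin> A \<longrightarrow> snd q j = 0 \<and> fst q j = 0" using supp \<open>q \<in> B\<close> by blast
    then show "\<exists>j\<in>A. snd q j \<noteq> 0 \<or> fst q j \<noteq> 0" using j by blast
    show "\<forall>p\<in>B. (\<Sum>j\<in>A. fst p j * snd q j + snd p j * fst q j) = 0"
      using comm \<open>q \<in> B\<close> by (simp add: symp_on_def)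
    have "card {j\<in>A. snd q j \<noteq> 0 \<or> fst q j \<noteq> 0} \<le> card A"
      using \<open>finite A\<close> by (intro card_mono) auto
    then show "card {j\<in>A. snd q j \<noteq> 0 \<or> fst q j \<noteq> 0} \<le> card B + 1" using True by linarith
  qed
next
  case False
  then obtain J where J: "J \<subseteq> A" "card J = card B + 1"
    using obtain_subset_with_card_n[of "card B + 1" A] by force
  then have "finite J" using \<open>finite A\<close> finite_subset by blast
  then obtain v where v: "\<forall>j. j \<notin> J \<longrightarrow> v j = 0" "\<exists>j\<in>J. v j \<noteq> 0"
    "\<forall>p\<in>B. (\<Sum>j\<in>J. fst p j * v j) = 0"
    using x_columns_dependent[OF \<open>finite B\<close>] J(2) by (metis less_add_one)
  have sum_eq: "(\<Sum>j\<in>A. fst p j * v j + snd p j * 0) = (\<Sum>j\<in>J. fst p j * v j)" for p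
    using J(1) v(1) \<open>finite A\<close> by (intro sum.mono_neutral_cong_right) auto
  have weight: "card {j\<in>A. v j \<noteq> 0 \<or> (0::bit) \<noteq> 0} \<le> card J"
    using v(1) \<open>finite J\<close> by (intro card_mono) auto
  show ?thesis
    by (rule exI[of _ v], rule exI[of _ "\<lambda>_. 0"]) (use v J sum_eq weight in auto)
qed

lemma symp_on_restr_active:
  assumes "\<forall>p\<in>S. pauli_on n p" "p \<in> S" "q \<in> S"
  shows "symp_on (active n S) (restr (active n S) p) (restr (active n S) q) = symp n p q"
  unfolding symp_eq_symp_on symp_on_def
proof (rule sum.mono_neutral_cong_left)
  show "\<forall>j\<in>{..<n} - active n S. fst p j * snd q j + snd p j * fst q j = 0"
    using assms(2,3) by (auto simp: active_def)
qed (auto simp: active_subset restr_def)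

lemma stage_exists:
  assumes fam: "commuting_family n r S" and "active n S \<noteq> {}"
  shows "\<exists>st. stage_ok n S st"
proof -
  let ?A = "active n S"
  let ?V = "restr ?A ` S"
  obtain B where B: "B \<subseteq> ?V" "pauli.independent B" "?V \<subseteq> pauli.span B"
    using pauli.maximal_independent_subset by blast
  have span_B: "pauli.span B = pauli.span ?V"
    using B by (metis pauli.span_eq pauli.span_superset subset_trans)
  have "finite B" using independent_in_restr_span_card_le[OF fam B(2)] B(1) pauli.span_superset by blast
  have "B \<noteq> {}" using generators_nonempty[OF assms(2) span_B] .
  have "0 \<notin> B" using B(2) pauli.dependent_zero by blast
  have supp: "\<forall>q\<in>B. \<forall>j. j \<notin> ?A \<longrightarrow> fst q j = 0 \<and> snd q j = 0"
    using B(1) by (auto simp: restr_def)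
  have comm: "\<forall>p\<in>B. \<forall>q\<in>B. symp_on ?A p q = 0"
  proof (intro ballI)
    fix p q assume "p \<in> B" "q \<in> B"
    then obtain p' q' where "p' \<in> S" "q' \<in> S" "p = restr ?A p'" "q = restr ?A q'"
      using B(1) by blast
    then show "symp_on ?A p q = 0"
      using fam symp_on_restr_active[of S n p' q'] by (simp add: commuting_family_def)
  qed
  obtain v w where vw: "\<forall>j. j \<notin> ?A \<longrightarrow> v j = 0 \<and> w j = 0" "\<exists>j\<in>?A. v j \<noteq> 0 \<or> w j \<noteq> 0"
    "\<forall>p\<in>B. (\<Sum>j\<in>?A. fst p j * v j + snd p j * w j) = 0"
    "card {j\<in>?A. v j \<noteq> 0 \<or> w j \<noteq> 0} \<le> card B + 1"
    using low_weight_null_vector_exists[OF finite_active \<open>finite B\<close> \<open>B \<noteq> {}\<close> \<open>0 \<notin> B\<close> supp comm]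
    by blast
  have "stage_ok n S (B, v, w, sorted_list_of_set {j\<in>?A. v j \<noteq> 0 \<or> w j \<noteq> 0})"
    using assms(2) \<open>finite B\<close> B(2) span_B vw finite_active
    by (auto simp: stage_ok_def Let_def f2indep_iff_independent f2span_eq_span)
  then show ?thesis by blast
qed

lemma complete_run_exists: "commuting_family n r S \<Longrightarrow> \<exists>R. complete_run n S R"
proof (induction "card (active n S)" arbitrary: S rule: less_induct)
  case less
  show ?case
  proof (cases "active n S = {}")
    case True
    then show ?thesis by (intro exI[of _ "[]"]) simp
  next
    case False
    then obtain st where st: "stage_ok n S st" using stage_exists[OF less.prems] by blast
    then obtain R where "complete_run n (conj_circ (stage_circ st) ` S) R"
      using less.hyps[OF card_active_stage_less commuting_family_stage] less.prems by blast
    then show ?thesis using st by (intro exI[of _ "st # R"]) simp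
  qed
qed

definition after_stages :: "stage list \<Rightarrow> pauli set \<Rightarrow> pauli set" where
  "after_stages R S = fold (\<lambda>st S. conj_circ (stage_circ st) ` S) R S"

lemma commuting_family_after_stages:
  "partial_run n S R \<Longrightarrow> commuting_family n r S \<Longrightarrow> commuting_family n r (after_stages R S)"
  by (induction R arbitrary: S) (auto simp: after_stages_def commuting_family_stage)

lemma complete_run_append:
  "partial_run n S R \<Longrightarrow> complete_run n (after_stages R S) R' \<Longrightarrow> complete_run n S (R @ R')"
  by (induction R arbitrary: S) (auto simp: after_stages_def)

lemma length_partial_run_le: "partial_run n S R \<Longrightarrow> length R \<le> card (active n S)"
proof (induction R arbitrary: S)
  case (Cons st R)
  then show ?case using card_active_stage_less[of n S st] by fastforce
qed simp

lemma complete_run_partial_run: "complete_run n S R \<Longrightarrow> partial_run n S R"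
  by (induction R arbitrary: S) auto

lemma complete_run_stage_ok: "complete_run n S R \<Longrightarrow> st \<in> set R \<Longrightarrow> \<exists>S'. stage_ok n S' st"
  by (induction R arbitrary: S) auto

lemma run_circ_Cons [simp]: "run_circ (st # R) = stage_circ st @ run_circ R"
  by (simp add: run_circ_def)

lemma complete_run_diagonal:
  "complete_run n S R \<Longrightarrow> p \<in> S \<Longrightarrow> diagonal_on n (conj_circ (run_circ R) p)"
proof (induction R arbitrary: S p)
  case Nil
  then show ?case by (auto simp: run_circ_def diagonal_on_def active_def)
next
  case (Cons st R)
  then show ?case using Cons.IH[of "conj_circ (stage_circ st) ` S"] by auto
qed

section \<open>Depth\<close>

lemma sched_stage_le:
  assumes ok: "stage_ok n S st" and "\<forall>q. t q \<le> M"
  shows "sched t (stage_circ st) q \<le> M + 3 + floor_log (stage_rank st)"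
proof -
  obtain T v w Q where st: "st = (T, v, w, Q)" by (cases st)
  note facts = stage_okD[OF ok[unfolded st]]
  have "length Q \<le> 2 ^ Suc (floor_log (card T))"
    using facts(10) floor_log_exp2_gt[of "card T"] by simp
  moreover have "\<forall>q. sched t (step1 v w Q) q \<le> M + 2"
    using sched_step1_le[OF facts(2)] \<open>\<forall>q. t q \<le> M\<close> by (simp add: le_SucI)
  ultimately have "sched (sched t (step1 v w Q)) (cnot_tree_fuel (length Q) Q) q
      \<le> M + 2 + Suc (floor_log (card T))"
    by (rule sched_cnot_tree_fuel_le[OF facts(2)])
  then show ?thesis
    by (simp add: st stage_rank_def stage_circ_def stage_gates_def cnot_tree_def sched_append)
qed

lemma sched_run_le:
  "complete_run n S R \<Longrightarrow> commuting_family n r S \<Longrightarrow> \<forall>q. t q \<le> M \<Longrightarrow>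
   sched t (run_circ R) q \<le> M + length R * (3 + floor_log r)"
proof (induction R arbitrary: S t M)
  case Nil
  then show ?case by (simp add: run_circ_def)
next
  case (Cons st R)
  then have ok: "stage_ok n S st" by simp
  have "floor_log (stage_rank st) \<le> floor_log r"
    using floor_log_le_iff stage_rank_le[OF Cons.prems(2) ok] by blast
  then have "\<forall>q. sched t (stage_circ st) q \<le> M + (3 + floor_log r)"
    using sched_stage_le[OF ok Cons.prems(3)] by (metis add.assoc add_left_mono order_trans)
  moreover have "complete_run n (conj_circ (stage_circ st) ` S) R" using Cons.prems(1) by simp
  ultimately have "sched (sched t (stage_circ st)) (run_circ R) q
      \<le> M + (3 + floor_log r) + length R * (3 + floor_log r)"
    using Cons.IH commuting_family_stage[OF ok Cons.prems(2)] by blast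
  then show ?case by (simp add: sched_append)
qed

lemma three_plus_floor_log_le: "real (3 + floor_log k) \<le> 3 * (1 + log 2 (real k))"
proof -
  have "real (floor_log k) \<le> log 2 (real k)"
    using le_log2_of_power[OF floor_log_exp2_le, of k] by (cases "k = 0") (auto simp: log_def)
  moreover have "0 \<le> log 2 (real k)" by (cases "k = 0") (auto simp: log_def)
  ultimately show ?thesis by simp
qed

lemma stage_depth_le:
  assumes "stage_ok n S st"
  shows "real (depth (stage_circ st)) \<le> 3 * (1 + log 2 (real (stage_rank st)))"
proof -
  have "depth (stage_circ st) \<le> 3 + floor_log (stage_rank st)"
    using sched_stage_le[OF assms, of "\<lambda>_. 0" 0] by (intro depth_le) simp
  then show ?thesis using three_plus_floor_log_le by (meson of_nat_mono order_trans)
qed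

lemma run_depth_le:
  assumes run: "complete_run n S R" and fam: "commuting_family n r S"
  shows "real (depth (run_circ R)) \<le> 3 * real n * (1 + log 2 (real r))"
proof -
  have "depth (run_circ R) \<le> length R * (3 + floor_log r)"
    using sched_run_le[OF run fam, of "\<lambda>_. 0" 0] by (intro depth_le) simp
  also have "\<dots> \<le> n * (3 + floor_log r)"
    using length_partial_run_le[OF complete_run_partial_run[OF run]] card_active_le[of n S]
    by simp
  finally have "real (depth (run_circ R)) \<le> real n * real (3 + floor_log r)"
    by (metis of_nat_mono of_nat_mult)
  also have "\<dots> \<le> real n * (3 * (1 + log 2 (real r)))"
    using three_plus_floor_log_le by (intro mult_left_mono) auto
  finally show ?thesis by (simp add: algebra_simps)
qed

theorem mainTheorem6:
  "\<exists>C::real. C > 0 \<and>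
    (\<forall>(n::nat) (P::pauli set) (r::nat).
       (\<forall>p\<in>P. pauli_on n p) \<and>
       (\<forall>p\<in>P. \<forall>q\<in>P. symp n p q = 0) \<and>
       (\<exists>G. finite G \<and> f2indep G \<and> card G = r \<and> f2span G = f2span P)
       \<longrightarrow>
       (\<forall>R. partial_run n P R \<longrightarrow> length R \<le> n \<and> (\<exists>R'. complete_run n P (R @ R'))) \<and>
       (\<forall>R. complete_run n P R \<longrightarrow>
          (\<forall>p\<in>P. diagonal_on n (conj_circ (run_circ R) p)) \<and>
          (\<forall>st\<in>set R. real (depth (stage_circ st)) \<le> C * (1 + log 2 (real (stage_rank st)))) \<and>
          real (depth (run_circ R)) \<le> C * real n * (1 + log 2 (real r))))"
proof (intro exI[of _ 3] conjI allI impI ballI; (elim conjE)?)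
  show "(0::real) < 3" by simp
  fix n r :: nat and P :: "pauli set" and R
  assume "\<forall>p\<in>P. pauli_on n p" "\<forall>p\<in>P. \<forall>q\<in>P. symp n p q = 0"
    "\<exists>G. finite G \<and> f2indep G \<and> card G = r \<and> f2span G = f2span P"
  then have fam: "commuting_family n r P"
    unfolding commuting_family_def f2span_eq_span using pauli.span_superset by fastforce
  {
    assume run: "partial_run n P R"
    show "length R \<le> n" using length_partial_run_le[OF run] card_active_le[of n P] by linarith
    show "\<exists>R'. complete_run n P (R @ R')"
      using complete_run_exists[OF commuting_family_after_stages[OF run fam]]
        complete_run_append[OF run] by blast
  }
  assume run: "complete_run n P R"
  show "\<And>p. p \<in> P \<Longrightarrow> diagonal_on n (conj_circ (run_circ R) p)"
    using complete_run_diagonal[OF run] .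
  show "\<And>st. st \<in> set R \<Longrightarrow> real (depth (stage_circ st)) \<le> 3 * (1 + log 2 (real (stage_rank st)))"
    using stage_depth_le complete_run_stage_ok[OF run] by blast
  show "real (depth (run_circ R)) \<le> 3 * real n * (1 + log 2 (real r))"
    using run_depth_le[OF run fam] .
qed

end
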